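(* Let $d_2=1$ and assume Assumptions 1 and 2. Then $$\sum_{n=1}^N\big(\hat p(\hat x_n,\hat y_n)-p^*_{\theta_*}(\hat x_n,\hat y_n)\big)^2\ \le\ \frac{Nx_{\max}^2y_{\max}^2}{y_{\min}^2\,\lambda_{\min}(\mathbb E[xx^\top])}\,\mathbb E_{x,y}\big[(\hat p(x,y)-p^*_{\theta_*}(x,y))^2\big],$$ where $(x,y)$ is distributed as an online feature.
   Context: Online features $(x,y)\in\mathcal X\times\mathcal Y\subset\mathbb R^{d_1}\times\mathbb R$ (here $d_2=1$), unknown online parameter $\theta_*=(\alpha_*,\beta_* )\in\Theta^\dagger$. Offline features and prices $\{(\hat x_n,\hat y_n,\hat p_n)\}_{n=1}^N$ with $(\hat x_n,\hat y_n)\in\mathcal X\times\mathcal Y$. $p^*_\theta(x,y)=\arg\max_{p\ge0}p(\alpha^\top x+\beta yp)$. Assumption 1: $\Theta^\dagger$, $\mathcal X\times\mathcal Y$ compact with $\|\alpha\|\le\alpha_{\max},|\beta|\le\beta_{\max},\|x\|\le x_{\max},|y|\le y_{\max}$; $\mathbb E[xx^\top]$ and $\mathbb E[y^2]$ positive; positive constants with $l_\alpha\le\alpha^\top x\le u_\alpha$, $l_\beta\le-\beta y\le u_\beta$ for all $(\alpha,\beta)\in\Theta^\dagger,(x,y)\in\mathcal X\times\mathcal Y$; hence $p^*_\theta(x,y)=-\alpha^\top x/(2\beta y)$ and $|y|\ge y_{\min}>0$ on $\mathcal Y$. Assumption 2: $\hat\Sigma_{x,x}=\sum_n\hat x_n\hat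 x_n^\top$ satisfies $\lambda_{\min}(\hat\Sigma_{x,x})\ge cN$ for some $c>0$. Define $\hat A=\hat\Sigma_{x,x}^{-1}\sum_n\hat x_n\hat y_n\hat p_n\in\mathbb R^{d_1}$ and $\hat p(x,y)=\hat A^\top x/y$. *)

theory Defs
  imports "HOL-Analysis.Analysis" "HOL-Probability.Probability"
begin

definition pstar :: "((real^'d) \<times> real) \<Rightarrow> real^'d \<Rightarrow> real \<Rightarrow> real" where
  "pstar \<theta> x y = (ARG_MAX (\<lambda>p. p * (fst \<theta> \<bullet> x + snd \<theta> * y * p)) p. p \<ge> 0)"

definition lambda_min :: "real^'n^'n \<Rightarrow> real" where
  "lambda_min A = Min {e. \<exists>v. v \<noteq> 0 \<and> A *v v = e *\<^sub>R v}"

definition second_moment :: "((real^'d) \<times> real) measure \<Rightarrow> real^'d^'d" where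
  "second_moment M = (\<chi> i j. \<integral>z. (fst z $ i) * (fst z $ j) \<partial>M)"

definition Sigma_hat :: "nat \<Rightarrow> (nat \<Rightarrow> real^'d) \<Rightarrow> real^'d^'d" where
  "Sigma_hat N xh = (\<chi> i j. \<Sum>n=1..N. xh n $ i * xh n $ j)"

definition A_hat :: "nat \<Rightarrow> (nat \<Rightarrow> real^'d) \<Rightarrow> (nat \<Rightarrow> real) \<Rightarrow> (nat \<Rightarrow> real) \<Rightarrow> real^'d" where
  "A_hat N xh yh ph = matrix_inv (Sigma_hat N xh) *v (\<Sum>n=1..N. (yh n * ph n) *\<^sub>R xh n)"

definition p_hat :: "nat \<Rightarrow> (nat \<Rightarrow> real^'d) \<Rightarrow> (nat \<Rightarrow> real) \<Rightarrow> (nat \<Rightarrow> real) \<Rightarrow> real^'d \<Rightarrow> real \<Rightarrow> real" where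
  "p_hat N xh yh ph x y = (A_hat N xh yh ph \<bullet> x) / y"

end

(*
  Write (a, b) for the true parameter theta_star. Under Assumption 1 the optimal price is
  pstar(x, y) = - a.x / (2 b y), so the error of the offline estimate is
  p_hat(x, y) - pstar(x, y) = w.x / y with w = A_hat + a / (2 b).
  Each offline squared error is at most |w|^2 xmax^2 / ymin^2, whereas the online mean squared error
  is at least E[(w.x)^2] / ymax^2 = w^T E[x x^T] w / ymax^2 >= lambda_min(E[x x^T]) |w|^2 / ymax^2.
  Comparing the two bounds gives the claim.
  That lambda_min bounds the quadratic form from below comes from minimising the Rayleigh quotient
  over the unit sphere.
*)
theory Submission
  imports Defs
begin

lemma arg_max_concave_quadratic:
  fixes a b :: real
  assumes "b < 0" and "a \<ge> 0"
  shows "(ARG_MAX (\<lambda>p. p * (a + b * p)) p. p \<ge> 0) = - a / (2 * b)"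
proof -
  define p0 where "p0 = - a / (2 * b)"
  have "a = - 2 * b * p0"
    using \<open>b < 0\<close> unfolding p0_def by simp
  then have complete_square: "p * (a + b * p) = p0 * (a + b * p0) + b * (p - p0)\<^sup>2" for p
    by (simp add: power2_eq_square algebra_simps)
  have "p0 \<ge> 0"
    using assms unfolding p0_def by (simp add: divide_nonneg_neg)
  have value_le_iff: "q * (a + b * q) \<le> p * (a + b * p) \<longleftrightarrow> (p - p0)\<^sup>2 \<le> (q - p0)\<^sup>2" for p q
    unfolding complete_square[of p] complete_square[of q] using \<open>b < 0\<close> by simp
  have "is_arg_max (\<lambda>p. p * (a + b * p)) (\<lambda>p. p \<ge> 0) p \<longleftrightarrow> p = p0" for p
    unfolding is_arg_max_linorder value_le_iff
  proof
    assume "0 \<le> p \<and> (\<forall>q. 0 \<le> q \<longrightarrow> (p - p0)\<^sup>2 \<le> (q - p0)\<^sup>2)"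
    then have "(p - p0)\<^sup>2 \<le> (p0 - p0)\<^sup>2"
      using \<open>p0 \<ge> 0\<close> by blast
    then show "p = p0"
      by simp
  qed (use \<open>p0 \<ge> 0\<close> in simp)
  then have "arg_max (\<lambda>p. p * (a + b * p)) (\<lambda>p. p \<ge> 0) = p0"
    unfolding arg_max_def by blast
  then show ?thesis
    unfolding p0_def .
qed

lemma pstar_eq:
  assumes "\<beta> * y < 0" and "\<alpha> \<bullet> x \<ge> 0"
  shows "pstar (\<alpha>, \<beta>) x y = - (\<alpha> \<bullet> x) / (2 * \<beta> * y)"
  using arg_max_concave_quadratic[OF assms] unfolding pstar_def by (simp add: mult.assoc)

lemma p_hat_minus_pstar:
  assumes "\<beta> * y < 0" and "\<alpha> \<bullet> x \<ge> 0"
  shows "p_hat N xh yh ph x y - pstar (\<alpha>, \<beta>) x y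
         = ((A_hat N xh yh ph + (1 / (2 * \<beta>)) *\<^sub>R \<alpha>) \<bullet> x) / y"
proof -
  have "\<beta> \<noteq> 0" and "y \<noteq> 0"
    using assms(1) by auto
  then show ?thesis
    unfolding pstar_eq[OF assms] p_hat_def by (simp add: inner_add_left field_simps)
qed

lemma inner_matrix_vector_symmetric:
  fixes S :: "real^'n^'n"
  assumes "transpose S = S"
  shows "(S *v u) \<bullet> v = u \<bullet> (S *v v)"
  by (metis assms dot_lmul_matrix inner_commute transpose_matrix_vector)

lemma finite_eigenvalues_symmetric:
  fixes S :: "real^'n^'n"
  assumes "transpose S = S"
  shows "finite {e. \<exists>v. v \<noteq> 0 \<and> S *v v = e *\<^sub>R v}"
proof -
  define E where "E = {e. \<exists>v. v \<noteq> 0 \<and> S *v v = e *\<^sub>R v}"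
  define vec where "vec e = (SOME v. v \<noteq> 0 \<and> S *v v = e *\<^sub>R v)" for e
  have vec: "vec e \<noteq> 0" "S *v vec e = e *\<^sub>R vec e" if "e \<in> E" for e
    using someI_ex[of "\<lambda>v. v \<noteq> 0 \<and> S *v v = e *\<^sub>R v"] that
    unfolding E_def vec_def by auto
  have "inj_on vec E"
  proof (rule inj_onI)
    fix e1 e2 assume "e1 \<in> E" "e2 \<in> E" "vec e1 = vec e2"
    then have "e1 *\<^sub>R vec e1 = e2 *\<^sub>R vec e1" and "vec e1 \<noteq> 0"
      using vec by metis+
    then show "e1 = e2"
      by (simp add: scaleR_cancel_right)
  qed
  moreover have "pairwise orthogonal (vec ` E)"
  proof (rule pairwiseI)
    fix v1 v2 assume "v1 \<in> vec ` E" "v2 \<in> vec ` E" "v1 \<noteq> v2"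
    then obtain e1 e2 where "e1 \<in> E" "e2 \<in> E" "v1 = vec e1" "v2 = vec e2" "e1 \<noteq> e2"
      by blast
    have "e1 * (vec e1 \<bullet> vec e2) = (S *v vec e1) \<bullet> vec e2"
      using vec \<open>e1 \<in> E\<close> by simp
    also have "\<dots> = vec e1 \<bullet> (S *v vec e2)"
      by (rule inner_matrix_vector_symmetric[OF assms])
    also have "\<dots> = e2 * (vec e1 \<bullet> vec e2)"
      using vec \<open>e2 \<in> E\<close> by simp
    finally show "orthogonal v1 v2"
      using \<open>e1 \<noteq> e2\<close> \<open>v1 = vec e1\<close> \<open>v2 = vec e2\<close> by (simp add: orthogonal_def)
  qed
  then have "finite (vec ` E)"
    by (rule pairwise_orthogonal_imp_finite)
  ultimately show ?thesis
    unfolding E_def[symmetric] using finite_imageD by blast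
qed

lemma psd_form_zero_imp_zero:
  fixes g :: "'a::real_inner \<Rightarrow> 'a"
  assumes "linear g" and sym: "\<And>u v. g u \<bullet> v = u \<bullet> g v"
    and psd: "\<And>v. v \<bullet> g v \<ge> 0" and "u \<bullet> g u = 0"
  shows "g u = 0"
proof (rule ccontr)
  assume "g u \<noteq> 0"
  define a where "a = g u \<bullet> g u"
  define b where "b = g u \<bullet> g (g u)"
  have "a > 0" and "b \<ge> 0"
    using \<open>g u \<noteq> 0\<close> psd unfolding a_def b_def by auto
  have quadratic: "t * (2 * a) \<le> t * (t * b)" for t
  proof -
    have "(u - t *\<^sub>R g u) \<bullet> g (u - t *\<^sub>R g u) = t\<^sup>2 * b - 2 * t * a"
      using \<open>u \<bullet> g u = 0\<close> sym[of u "g u"]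
      by (simp add: linear_diff[OF \<open>linear g\<close>] linear_scale[OF \<open>linear g\<close>] inner_diff_left
          inner_diff_right inner_commute[of u] a_def b_def power2_eq_square algebra_simps)
    with psd[of "u - t *\<^sub>R g u"] show ?thesis
      by (simp add: power2_eq_square algebra_simps)
  qed
  define t where "t = a / (b + 1)"
  have "t > 0"
    using \<open>a > 0\<close> \<open>b \<ge> 0\<close> unfolding t_def by simp
  then have "2 * a \<le> t * b"
    using quadratic[of t] by simp
  also have "t * b \<le> a"
    using \<open>a > 0\<close> \<open>b \<ge> 0\<close> unfolding t_def by (simp add: field_simps)
  finally show False
    using \<open>a > 0\<close> by simp
qed

lemma rayleigh_min_eigenvalue:
  fixes S :: "real^'n^'n"
  assumes "transpose S = S"
  obtains m u where "u \<noteq> 0" and "S *v u = m *\<^sub>R u" and "\<And>v. m * (norm v)\<^sup>2 \<le> v \<bullet> (S *v v)"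
proof -
  define q where "q v = v \<bullet> (S *v v)" for v
  have "continuous_on (sphere 0 1) q"
    unfolding q_def by (intro continuous_intros linear_continuous_on matrix_vector_mul_bounded_linear)
  moreover have "sphere (0::real^'n) 1 \<noteq> {}"
    using norm_axis_1 by (metis mem_sphere_0 empty_iff)
  ultimately obtain u where "u \<in> sphere 0 1" and u_min: "\<And>v. v \<in> sphere 0 1 \<Longrightarrow> q u \<le> q v"
    using continuous_attains_inf[OF compact_sphere] by blast
  then have "norm u = 1"
    by simp
  have lower: "q u * (norm v)\<^sup>2 \<le> q v" for v
  proof (cases "v = 0")
    case False
    have "q u \<le> q (v /\<^sub>R norm v)"
      using False by (intro u_min) simp
    also have "\<dots> = q v / (norm v)\<^sup>2"
      unfolding q_def
      by (simp add: matrix_vector_mult_scaleR power2_eq_square divide_inverse inverse_mult_distrib mult_ac)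
    finally show ?thesis
      using False by (simp add: field_simps)
  qed (simp add: q_def)
  \<comment> \<open>\<open>S - q u\<close> is positive semidefinite and its form vanishes at \<open>u\<close>\<close>
  define g where "g v = S *v v - q u *\<^sub>R v" for v
  have "linear g"
    unfolding linear_iff g_def
    by (simp add: matrix_vector_right_distrib matrix_vector_mult_scaleR scaleR_diff_right scaleR_right_distrib)
  moreover have "g v \<bullet> w = v \<bullet> g w" for v w
    unfolding g_def using inner_matrix_vector_symmetric[OF assms]
    by (simp add: inner_diff_left inner_diff_right)
  moreover have "v \<bullet> g v \<ge> 0" for v
    using lower[of v] unfolding g_def q_def by (simp add: inner_diff_right power2_norm_eq_inner)
  moreover have "u \<bullet> g u = 0"
    using \<open>norm u = 1\<close> unfolding g_def q_def
    by (simp add: inner_diff_right power2_norm_eq_inner[symmetric])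
  ultimately have "g u = 0"
    by (rule psd_form_zero_imp_zero)
  then have "S *v u = q u *\<^sub>R u"
    unfolding g_def by simp
  moreover have "u \<noteq> 0"
    using \<open>norm u = 1\<close> by auto
  ultimately show ?thesis
    using that lower unfolding q_def by blast
qed

lemma
  fixes S :: "real^'n^'n"
  assumes "transpose S = S"
  shows lambda_min_eigenvector: "\<exists>v. v \<noteq> 0 \<and> S *v v = lambda_min S *\<^sub>R v"
    and lambda_min_le_quadratic_form: "lambda_min S * (norm v)\<^sup>2 \<le> v \<bullet> (S *v v)"
proof -
  define E where "E = {e. \<exists>v. v \<noteq> 0 \<and> S *v v = e *\<^sub>R v}"
  have "finite E"
    unfolding E_def by (rule finite_eigenvalues_symmetric[OF assms])
  obtain m u where "u \<noteq> 0" "S *v u = m *\<^sub>R u" and m_le: "\<And>v. m * (norm v)\<^sup>2 \<le> v \<bullet> (S *v v)"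
    using rayleigh_min_eigenvalue[OF assms] by blast
  then have "m \<in> E"
    unfolding E_def by blast
  have "lambda_min S = Min E"
    unfolding lambda_min_def E_def ..
  then show "\<exists>v. v \<noteq> 0 \<and> S *v v = lambda_min S *\<^sub>R v"
    using Min_in[OF \<open>finite E\<close>] \<open>m \<in> E\<close> unfolding E_def by auto
  have "lambda_min S \<le> m"
    using \<open>lambda_min S = Min E\<close> \<open>finite E\<close> \<open>m \<in> E\<close> by simp
  then have "lambda_min S * (norm v)\<^sup>2 \<le> m * (norm v)\<^sup>2"
    by (simp add: mult_right_mono)
  also have "\<dots> \<le> v \<bullet> (S *v v)"
    by (rule m_le)
  finally show "lambda_min S * (norm v)\<^sup>2 \<le> v \<bullet> (S *v v)" .
qed

lemma lambda_min_pos: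
  fixes S :: "real^'n^'n"
  assumes "transpose S = S" and "\<And>v. v \<noteq> 0 \<Longrightarrow> v \<bullet> (S *v v) > 0"
  shows "lambda_min S > 0"
proof -
  obtain v where "v \<noteq> 0" and "S *v v = lambda_min S *\<^sub>R v"
    using lambda_min_eigenvector[OF assms(1)] by blast
  then have "lambda_min S * (norm v)\<^sup>2 > 0"
    using assms(2)[of v] by (simp add: power2_norm_eq_inner)
  then show ?thesis
    by (simp add: zero_less_mult_iff)
qed

lemma square_inner_le:
  fixes w x :: "'a::real_inner"
  assumes "norm x \<le> r"
  shows "(w \<bullet> x)\<^sup>2 \<le> (norm w * r)\<^sup>2"
proof -
  have "\<bar>w \<bullet> x\<bar> \<le> norm w * norm x"
    by (rule Cauchy_Schwarz_ineq2)
  also have "\<dots> \<le> norm w * r"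
    using assms by (simp add: mult_left_mono)
  also have "\<dots> \<le> \<bar>norm w * r\<bar>"
    by simp
  finally show ?thesis
    by (simp add: abs_le_square_iff)
qed

lemma square_inner_divide_le:
  fixes w x :: "'a::real_inner"
  assumes "norm x \<le> r" and "0 < m" and "m \<le> \<bar>y\<bar>"
  shows "(w \<bullet> x / y)\<^sup>2 \<le> (norm w * r / m)\<^sup>2"
proof -
  have "m\<^sup>2 \<le> y\<^sup>2"
    using assms(2,3) abs_le_square_iff by fastforce
  then have "(w \<bullet> x)\<^sup>2 / y\<^sup>2 \<le> (norm w * r)\<^sup>2 / m\<^sup>2"
    using square_inner_le[OF assms(1)] \<open>0 < m\<close> by (intro frac_le) auto
  then show ?thesis
    by (simp add: power_divide)
qed

lemma space_eq_restrict_borel: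
  assumes "sets M = sets (restrict_space borel A)"
  shows "space M = A"
  using sets_eq_imp_space_eq[OF assms] by (simp add: space_restrict_space)

lemma measurable_restrict_borel:
  assumes "sets M = sets (restrict_space borel A)" and "f \<in> borel_measurable borel"
  shows "f \<in> borel_measurable M"
  using measurable_restrict_space1[OF assms(2)] measurable_cong_sets[OF assms(1) refl] by blast

lemma integrable_bounded_restrict_borel:
  fixes f :: "'a::topological_space \<Rightarrow> real"
  assumes "finite_measure M" and "sets M = sets (restrict_space borel A)"
    and "f \<in> borel_measurable borel" and "\<And>z. z \<in> A \<Longrightarrow> \<bar>f z\<bar> \<le> B"
  shows "integrable M f"
proof (rule finite_measure.integrable_const_bound[OF assms(1)])
  show "AE z in M. norm (f z) \<le> B"
    using assms(4) by (intro AE_I2) (simp add: space_eq_restrict_borel[OF assms(2)])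
  show "f \<in> borel_measurable M"
    by (rule measurable_restrict_borel[OF assms(2,3)])
qed

lemma transpose_second_moment: "transpose (second_moment M) = second_moment M"
  unfolding second_moment_def transpose_def by (simp add: vec_eq_iff mult.commute)

lemma quadratic_form_second_moment:
  fixes w :: "real^'d" and M :: "((real^'d) \<times> real) measure"
  assumes "\<And>i j. integrable M (\<lambda>z. fst z $ i * fst z $ j)"
  shows "w \<bullet> (second_moment M *v w) = (\<integral>z. (w \<bullet> fst z)\<^sup>2 \<partial>M)"
proof -
  have square: "(w \<bullet> x)\<^sup>2 = (\<Sum>i\<in>UNIV. \<Sum>j\<in>UNIV. (w $ i * w $ j) * (x $ i * x $ j))" for x :: "real^'d"
    by (simp add: inner_vec_def power2_eq_square sum_product algebra_simps)
  have "(\<integral>z. (w \<bullet> fst z)\<^sup>2 \<partial>M)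
      = (\<Sum>i\<in>UNIV. \<Sum>j\<in>UNIV. (w $ i * w $ j) * (\<integral>z. fst z $ i * fst z $ j \<partial>M))"
    unfolding square using assms by (simp add: integrable_sum)
  also have "\<dots> = w \<bullet> (second_moment M *v w)"
    unfolding second_moment_def
    by (simp add: inner_vec_def matrix_vector_mult_def sum_distrib_left algebra_simps)
  finally show ?thesis ..
qed

lemma lambda_min_second_moment_le_expectation:
  fixes M :: "((real^'d) \<times> real) measure"
  assumes "finite_measure M" and "sets M = sets (restrict_space borel (X \<times> Y))"
    and X: "\<And>x. x \<in> X \<Longrightarrow> norm x \<le> xmax"
    and Y: "\<And>y. y \<in> Y \<Longrightarrow> \<bar>y\<bar> \<le> ymax" "\<And>y. y \<in> Y \<Longrightarrow> ymin \<le> \<bar>y\<bar>" and "ymin > 0"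
  shows "lambda_min (second_moment M) * (norm w)\<^sup>2 / ymax\<^sup>2 \<le> (\<integral>z. (w \<bullet> fst z / snd z)\<^sup>2 \<partial>M)"
proof -
  note integrable = integrable_bounded_restrict_borel[OF assms(1,2)]
  have "integrable M (\<lambda>z. fst z $ i * fst z $ j)" for i j
  proof (rule integrable[where B = "xmax\<^sup>2"])
    fix z :: "(real^'d) \<times> real" assume "z \<in> X \<times> Y"
    then have "\<bar>fst z $ i\<bar> \<le> xmax" "\<bar>fst z $ j\<bar> \<le> xmax"
      using X component_le_norm_cart order_trans by (metis mem_Times_iff)+
    then show "\<bar>fst z $ i * fst z $ j\<bar> \<le> xmax\<^sup>2"
      by (simp add: abs_mult power2_eq_square mult_mono')
  qed (intro borel_measurable_continuous_onI continuous_intros)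
  then have "lambda_min (second_moment M) * (norm w)\<^sup>2 / ymax\<^sup>2 \<le> (\<integral>z. (w \<bullet> fst z)\<^sup>2 \<partial>M) / ymax\<^sup>2"
    by (intro divide_right_mono) (simp_all add: lambda_min_le_quadratic_form transpose_second_moment
        flip: quadratic_form_second_moment)
  also have "\<dots> = (\<integral>z. (w \<bullet> fst z)\<^sup>2 / ymax\<^sup>2 \<partial>M)"
    by simp
  also have "\<dots> \<le> (\<integral>z. (w \<bullet> fst z / snd z)\<^sup>2 \<partial>M)"
  proof (rule integral_mono)
    have "integrable M (\<lambda>z. (w \<bullet> fst z)\<^sup>2)"
      by (rule integrable[where B = "(norm w * xmax)\<^sup>2"])
        (intro borel_measurable_continuous_onI continuous_intros, auto simp: X square_inner_le)
    then show "integrable M (\<lambda>z. (w \<bullet> fst z)\<^sup>2 / ymax\<^sup>2)"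
      by simp
    show "integrable M (\<lambda>z. (w \<bullet> fst z / snd z)\<^sup>2)"
      by (rule integrable[where B = "(norm w * xmax / ymin)\<^sup>2"])
        (intro borel_measurable_power borel_measurable_divide borel_measurable_continuous_onI
          continuous_intros, auto simp: X Y \<open>ymin > 0\<close> square_inner_divide_le)
    fix z assume "z \<in> space M"
    then have "snd z \<in> Y"
      by (auto simp: space_eq_restrict_borel[OF assms(2)])
    then have "0 < (snd z)\<^sup>2" and "(snd z)\<^sup>2 \<le> ymax\<^sup>2"
      using Y[of "snd z"] \<open>ymin > 0\<close> by (auto simp: abs_le_square_iff[symmetric])
    then show "(w \<bullet> fst z)\<^sup>2 / ymax\<^sup>2 \<le> (w \<bullet> fst z / snd z)\<^sup>2"
      by (simp add: power_divide frac_le)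
  qed
  finally show ?thesis .
qed

lemma sum_square_ratio_le_expectation:
  fixes M :: "((real^'d) \<times> real) measure" and xh :: "nat \<Rightarrow> real^'d"
  assumes "prob_space M" and sets_M: "sets M = sets (restrict_space borel (X \<times> Y))"
    and X: "\<And>x. x \<in> X \<Longrightarrow> norm x \<le> xmax"
    and Y: "\<And>y. y \<in> Y \<Longrightarrow> \<bar>y\<bar> \<le> ymax" "\<And>y. y \<in> Y \<Longrightarrow> ymin \<le> \<bar>y\<bar>" and "ymin > 0"
    and posdef: "\<And>v. v \<noteq> 0 \<Longrightarrow> v \<bullet> (second_moment M *v v) > 0"
    and offline: "\<And>n. n \<in> {1..N} \<Longrightarrow> xh n \<in> X \<and> yh n \<in> Y"
  shows "(\<Sum>n=1..N. (w \<bullet> xh n / yh n)\<^sup>2)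
         \<le> real N * xmax\<^sup>2 * ymax\<^sup>2 / (ymin\<^sup>2 * lambda_min (second_moment M))
            * (\<integral>z. (w \<bullet> fst z / snd z)\<^sup>2 \<partial>M)"
proof -
  interpret prob_space M
    by (rule assms(1))
  define L where "L = lambda_min (second_moment M)"
  have "L > 0"
    unfolding L_def using transpose_second_moment posdef by (rule lambda_min_pos)
  obtain y0 where "y0 \<in> Y"
    using not_empty space_eq_restrict_borel[OF sets_M] by auto
  then have "ymax > 0"
    using Y \<open>ymin > 0\<close> by force
  have "(\<Sum>n=1..N. (w \<bullet> xh n / yh n)\<^sup>2) \<le> real N * (norm w * xmax / ymin)\<^sup>2"
    using sum_bounded_above[of "{1..N}" "\<lambda>n. (w \<bullet> xh n / yh n)\<^sup>2"] offline X Y \<open>ymin > 0\<close>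
    by (simp add: square_inner_divide_le)
  also have "\<dots> = real N * xmax\<^sup>2 * ymax\<^sup>2 / (ymin\<^sup>2 * L) * (L * (norm w)\<^sup>2 / ymax\<^sup>2)"
    using \<open>L > 0\<close> \<open>ymax > 0\<close> by (simp add: field_simps power_mult_distrib)
  also have "\<dots> \<le> real N * xmax\<^sup>2 * ymax\<^sup>2 / (ymin\<^sup>2 * L) * (\<integral>z. (w \<bullet> fst z / snd z)\<^sup>2 \<partial>M)"
    using \<open>L > 0\<close> unfolding L_def
    by (intro mult_left_mono lambda_min_second_moment_le_expectation[OF _ sets_M X Y \<open>ymin > 0\<close>])
      (simp_all add: finite_measure_axioms)
  finally show ?thesis
    unfolding L_def .
qed

theorem lemmaD10:
  fixes \<Theta> :: "((real^'d) \<times> real) set" and X :: "(real^'d) set" and Y :: "real set"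
    and \<alpha>s :: "real^'d" and \<beta>s :: real
    and M :: "((real^'d) \<times> real) measure"
    and N :: nat and xh :: "nat \<Rightarrow> real^'d" and yh ph :: "nat \<Rightarrow> real"
    and \<alpha>max \<beta>max xmax ymax ymin l\<alpha> u\<alpha> l\<beta> u\<beta> c :: real
  assumes theta_in: "(\<alpha>s, \<beta>s) \<in> \<Theta>"
    and comp_Theta: "compact \<Theta>" and comp_X: "compact X" and comp_Y: "compact Y"
    and bnd_Theta: "\<And>\<alpha> \<beta>. (\<alpha>, \<beta>) \<in> \<Theta> \<Longrightarrow> norm \<alpha> \<le> \<alpha>max \<and> \<bar>\<beta>\<bar> \<le> \<beta>max"
    and bnd_X: "\<And>x. x \<in> X \<Longrightarrow> norm x \<le> xmax"
    and bnd_Y: "\<And>y. y \<in> Y \<Longrightarrow> \<bar>y\<bar> \<le> ymax"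
    and prob: "prob_space M"
    and sets_M: "sets M = sets (restrict_space borel (X \<times> Y))"
    and Exx_pos: "\<And>v. v \<noteq> 0 \<Longrightarrow> v \<bullet> (second_moment M *v v) > 0"
    and Eyy_pos: "(\<integral>z. (snd z)\<^sup>2 \<partial>M) > 0"
    and consts_pos: "l\<alpha> > 0" "u\<alpha> > 0" "l\<beta> > 0" "u\<beta> > 0"
    and alpha_bnd: "\<And>\<alpha> \<beta> x y. (\<alpha>, \<beta>) \<in> \<Theta> \<Longrightarrow> x \<in> X \<Longrightarrow> y \<in> Y \<Longrightarrow>
                      l\<alpha> \<le> \<alpha> \<bullet> x \<and> \<alpha> \<bullet> x \<le> u\<alpha>"
    and beta_bnd: "\<And>\<alpha> \<beta> x y. (\<alpha>, \<beta>) \<in> \<Theta> \<Longrightarrow> x \<in> X \<Longrightarrow> y \<in> Y \<Longrightarrow>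
                      l\<beta> \<le> - \<beta> * y \<and> - \<beta> * y \<le> u\<beta>"
    and ymin_pos: "ymin > 0"
    and ymin_bnd: "\<And>y. y \<in> Y \<Longrightarrow> ymin \<le> \<bar>y\<bar>"
    and offline_in: "\<And>n. n \<in> {1..N} \<Longrightarrow> xh n \<in> X \<and> yh n \<in> Y"
    and c_pos: "c > 0"
    and assm2: "lambda_min (Sigma_hat N xh) \<ge> c * real N"
  shows "(\<Sum>n=1..N. (p_hat N xh yh ph (xh n) (yh n) - pstar (\<alpha>s, \<beta>s) (xh n) (yh n))\<^sup>2)
         \<le> real N * xmax\<^sup>2 * ymax\<^sup>2 / (ymin\<^sup>2 * lambda_min (second_moment M))
            * (\<integral>z. (p_hat N xh yh ph (fst z) (snd z) - pstar (\<alpha>s, \<beta>s) (fst z) (snd z))\<^sup>2 \<partial>M)"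
proof -
  interpret prob_space M
    by (rule prob)
  obtain x0 y0 where "x0 \<in> X" and "y0 \<in> Y"
    using not_empty space_eq_restrict_borel[OF sets_M] by auto
  have "\<beta>s * y < 0" if "y \<in> Y" for y
    using beta_bnd[OF theta_in \<open>x0 \<in> X\<close> that] consts_pos by linarith
  moreover have "\<alpha>s \<bullet> x \<ge> 0" if "x \<in> X" for x
    using alpha_bnd[OF theta_in that \<open>y0 \<in> Y\<close>] consts_pos by linarith
  moreover define w where "w = A_hat N xh yh ph + (1 / (2 * \<beta>s)) *\<^sub>R \<alpha>s"
  ultimately have error: "p_hat N xh yh ph x y - pstar (\<alpha>s, \<beta>s) x y = w \<bullet> x / y"
    if "x \<in> X" and "y \<in> Y" for x y
    using that by (simp add: p_hat_minus_pstar)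
  have "(\<Sum>n=1..N. (p_hat N xh yh ph (xh n) (yh n) - pstar (\<alpha>s, \<beta>s) (xh n) (yh n))\<^sup>2)
      = (\<Sum>n=1..N. (w \<bullet> xh n / yh n)\<^sup>2)"
    using offline_in by (simp add: error)
  also have "\<dots> \<le> real N * xmax\<^sup>2 * ymax\<^sup>2 / (ymin\<^sup>2 * lambda_min (second_moment M))
      * (\<integral>z. (w \<bullet> fst z / snd z)\<^sup>2 \<partial>M)"
    by (rule sum_square_ratio_le_expectation[OF prob sets_M bnd_X bnd_Y ymin_bnd ymin_pos Exx_pos
          offline_in])
  also have "(\<integral>z. (w \<bullet> fst z / snd z)\<^sup>2 \<partial>M)
      = (\<integral>z. (p_hat N xh yh ph (fst z) (snd z) - pstar (\<alpha>s, \<beta>s) (fst z) (snd z))\<^sup>2 \<partial>M)"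
    by (intro Bochner_Integration.integral_cong) (auto simp: error space_eq_restrict_borel[OF sets_M])
  finally show ?thesis .
qed

end
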